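(* With probability $1-o(1)$ (as $n\to\infty$), the capacitated graph $G=(V,E,c)$ has total edge capacity $c(E)=\sum_{e\in E}c(e)=O(n)$.
   Context: All logarithms are base 2. Let $n$ be a large even integer and $V$ a set of $n$ vertices; $G=(V,E)$ is the random 10-regular multigraph whose edges are the union of 10 independent uniformly random perfect matchings on $V$; $\mathrm{dist}_G$ is hop distance. Fix a small constant $\varepsilon>0$, $\alpha=\frac{\log 5}{\log 5+1-\varepsilon}$, and an arbitrary terminal set $T\subseteq V$ with $|T|=k=\lfloor n/2^{(\log n)^\alpha}\rfloor$. For $i\ge 0$ let $N_i=\{u:\min_{t\in T}\mathrm{dist}_G(u,t)=i\}$ and $B_i=N_0\cup\dots\cup N_i$. Let $m=\lfloor 10n/(\log n)^\alpha\rfloor$ and $r=\min\{i:|B_i|\ge 2m\}-1$. Edge capacities: let $E_{r+1}$ be the set of edges between $N_r$ and $N_{r+1}$. Build an edge set $E_T$ with values $c'$: for each $u\in N_r$, let $E_u$ be the set of edges of $E_{r+1}$ incident to $u$, pick an arbitrary edge $e_u$ from $u$ to a vertex of $N_{r-1}$, add $e_u$ to $E_T$ with $c'(e_u)=|E_u|$. Then for $i=r-1,r-2,\dots,1$ in turn, for each $u\in N_i$ let $E_u$ be the set of edges currently in $E_T$ incident to $u$, pick an arbitrary edge $e_u$ from $u$ to a vertex of $N_{i-1}$, and add it to $E_T$ with $c'(e_u)=\sum_{e\in E_u}c'(e)$. Finally set $c(e)=\max\{c'(e),1\}$ for $e\in E_T$ and $c(e)=1$ for all other $e\in E$. *)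

theory Defs
  imports "HOL-Probability.Probability"
begin

text \<open>A perfect matching on {0..<n} is a fixed-point-free
involution on {0..<n} (identity outside, to make the set finite).
The random graph is a uniformly random 10-tuple of perfect matchings
(equivalently, 10 independent uniform perfect matchings).
An edge of the multigraph is a pair (j, a) with j < 10, a < n, a < ms j a:
the edge of matching j between a and ms j a.\<close>

definition perfect_matchings :: "nat \<Rightarrow> (nat \<Rightarrow> nat) set" where
  "perfect_matchings n = {f. (\<forall>i<n. f i < n \<and> f i \<noteq> i \<and> f (f i) = i) \<and> (\<forall>i. n \<le> i \<longrightarrow> f i = i)}"

definition graph_space :: "nat \<Rightarrow> (nat \<Rightarrow> nat \<Rightarrow> nat) set" where
  "graph_space n = PiE {..<10} (\<lambda>_. perfect_matchings n)"

definition edges :: "nat \<Rightarrow> (nat \<Rightarrow> nat \<Rightarrow> nat) \<Rightarrow> (nat \<times> nat) set" where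
  "edges n ms = {(j, a). j < 10 \<and> a < n \<and> a < ms j a}"

definition adj :: "nat \<Rightarrow> (nat \<Rightarrow> nat \<Rightarrow> nat) \<Rightarrow> (nat \<times> nat) set" where
  "adj n ms = {(u, v). u < n \<and> (\<exists>j<10. ms j u = v)}"

definition ball :: "nat \<Rightarrow> (nat \<Rightarrow> nat \<Rightarrow> nat) \<Rightarrow> nat set \<Rightarrow> nat \<Rightarrow> nat set" where
  "ball n ms T i = {u. u < n \<and> (\<exists>t\<in>T. \<exists>d\<le>i. (u, t) \<in> (adj n ms) ^^ d)}"

fun layer :: "nat \<Rightarrow> (nat \<Rightarrow> nat \<Rightarrow> nat) \<Rightarrow> nat set \<Rightarrow> nat \<Rightarrow> nat set" where
  "layer n ms T 0 = ball n ms T 0"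
| "layer n ms T (Suc i) = ball n ms T (Suc i) - ball n ms T i"

definition k_param :: "real \<Rightarrow> nat \<Rightarrow> nat" where
  "k_param \<alpha> n = nat \<lfloor>real n / 2 powr ((log 2 (real n)) powr \<alpha>)\<rfloor>"

definition m_param :: "real \<Rightarrow> nat \<Rightarrow> nat" where
  "m_param \<alpha> n = nat \<lfloor>10 * real n / (log 2 (real n)) powr \<alpha>\<rfloor>"

definition r_param :: "real \<Rightarrow> nat \<Rightarrow> (nat \<Rightarrow> nat \<Rightarrow> nat) \<Rightarrow> nat set \<Rightarrow> nat" where
  "r_param \<alpha> n ms T = (LEAST i. card (ball n ms T i) \<ge> 2 * m_param \<alpha> n) - 1"

text \<open>Vertices u in N_1 \<union> ... \<union> N_r, which receive an edge e_u.\<close>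
definition inner_set :: "nat \<Rightarrow> (nat \<Rightarrow> nat \<Rightarrow> nat) \<Rightarrow> nat set \<Rightarrow> nat \<Rightarrow> nat set" where
  "inner_set n ms T r = {u. \<exists>i. 1 \<le> i \<and> i \<le> r \<and> u \<in> layer n ms T i}"

text \<open>A valid choice: sigma u is the matching index of the chosen edge e_u from u
to a vertex of N_{i-1}, for every u in N_i, 1 \<le> i \<le> r.\<close>
definition valid_choice :: "nat \<Rightarrow> (nat \<Rightarrow> nat \<Rightarrow> nat) \<Rightarrow> nat set \<Rightarrow> nat \<Rightarrow> (nat \<Rightarrow> nat) \<Rightarrow> bool" where
  "valid_choice n ms T r \<sigma> = (\<forall>i. 1 \<le> i \<and> i \<le> r \<longrightarrow>
      (\<forall>u \<in> layer n ms T i. \<sigma> u < 10 \<and> ms (\<sigma> u) u \<in> layer n ms T (i - 1)))"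

text \<open>The edge e_u, normalized as an element of edges.\<close>
definition chosen_edge :: "(nat \<Rightarrow> nat \<Rightarrow> nat) \<Rightarrow> (nat \<Rightarrow> nat) \<Rightarrow> nat \<Rightarrow> nat \<times> nat" where
  "chosen_edge ms \<sigma> u = (\<sigma> u, min u (ms (\<sigma> u) u))"

text \<open>load d u is c'(e_u) for u in N_(r-d): for d = 0 it is the number of edges between
u and N_(r+1); for d+1 it is the sum of c'(e_w) over the edges e_w already in E_T that are
incident to u, i.e. over the w in N_(r-d) whose chosen edge ends at u.\<close>
primrec load :: "nat \<Rightarrow> (nat \<Rightarrow> nat \<Rightarrow> nat) \<Rightarrow> nat set \<Rightarrow> nat \<Rightarrow> (nat \<Rightarrow> nat) \<Rightarrow> nat \<Rightarrow> nat \<Rightarrow> nat" where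
  "load n ms T r \<sigma> 0 u = card {j. j < 10 \<and> ms j u \<in> layer n ms T (Suc r)}"
| "load n ms T r \<sigma> (Suc d) u =
     (\<Sum>w \<in> {w \<in> layer n ms T (r - d). ms (\<sigma> w) w = u}. load n ms T r \<sigma> d w)"

definition ET :: "nat \<Rightarrow> (nat \<Rightarrow> nat \<Rightarrow> nat) \<Rightarrow> nat set \<Rightarrow> nat \<Rightarrow> (nat \<Rightarrow> nat) \<Rightarrow> (nat \<times> nat) set" where
  "ET n ms T r \<sigma> = chosen_edge ms \<sigma> ` inner_set n ms T r"

definition cprime :: "nat \<Rightarrow> (nat \<Rightarrow> nat \<Rightarrow> nat) \<Rightarrow> nat set \<Rightarrow> nat \<Rightarrow> (nat \<Rightarrow> nat) \<Rightarrow> nat \<times> nat \<Rightarrow> nat" where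
  "cprime n ms T r \<sigma> e =
     (let u = (THE u. u \<in> inner_set n ms T r \<and> chosen_edge ms \<sigma> u = e);
          i = (THE i. u \<in> layer n ms T i)
      in load n ms T r \<sigma> (r - i) u)"

definition capacity :: "nat \<Rightarrow> (nat \<Rightarrow> nat \<Rightarrow> nat) \<Rightarrow> nat set \<Rightarrow> nat \<Rightarrow> (nat \<Rightarrow> nat) \<Rightarrow> nat \<times> nat \<Rightarrow> nat" where
  "capacity n ms T r \<sigma> e =
     (if e \<in> ET n ms T r \<sigma> then max (cprime n ms T r \<sigma> e) 1 else 1)"

definition total_capacity :: "nat \<Rightarrow> (nat \<Rightarrow> nat \<Rightarrow> nat) \<Rightarrow> nat set \<Rightarrow> nat \<Rightarrow> (nat \<Rightarrow> nat) \<Rightarrow> nat" where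
  "total_capacity n ms T r \<sigma> = (\<Sum>e \<in> edges n ms. capacity n ms T r \<sigma> e)"

text \<open>The good event: r is well defined and, for every admissible sequence of arbitrary
choices of the edges e_u, c(E) \<le> C n.\<close>
definition good_event :: "real \<Rightarrow> real \<Rightarrow> nat \<Rightarrow> nat set \<Rightarrow> (nat \<Rightarrow> nat \<Rightarrow> nat) \<Rightarrow> bool" where
  "good_event \<alpha> C n T ms =
     ((\<exists>i. card (ball n ms T i) \<ge> 2 * m_param \<alpha> n) \<and>
      (\<forall>\<sigma>. valid_choice n ms T (r_param \<alpha> n ms T) \<sigma> \<longrightarrow>
         real (total_capacity n ms T (r_param \<alpha> n ms T) \<sigma>) \<le> C * real n))"

definition good_prob :: "real \<Rightarrow> real \<Rightarrow> nat \<Rightarrow> nat set \<Rightarrow> real" where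
  "good_prob \<alpha> C n T = measure_pmf.prob (pmf_of_set (graph_space n)) {ms. good_event \<alpha> C n T ms}"

end

theory Submission
  imports Defs "HOL-Real_Asymp.Real_Asymp"
begin

(* Write a = (log n)^alpha, so that k is about n / 2^a and 2m is about 20 n / a.
   A union bound over pairs (S, U) with |U| < 2|S| shows that, with probability at least
   1 - 2^(1 - k), every vertex set S with k <= |S| < 2m has at least 2|S| vertices in its closed
   neighbourhood. Then the balls B_i around T double until they reach size 2m, so 2^r k < 2m,
   which forces r < a, and |N_r| < 2m. The value c'(e_u) counts the edges between N_r and N_(r+1)
   that are routed through u, so the capacities chosen in each layer add up to at most 10 |N_r|.
   Hence c(E) <= 10 n + 10 r |N_r| <= 10 n + 10 a (20 n / a) = 210 n. *)

section \<open>Elementary estimates\<close>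

lemma real_card_UN_le:
  assumes "finite I"
  shows "real (card (\<Union>i\<in>I. A i)) \<le> (\<Sum>i\<in>I. real (card (A i)))"
  using of_nat_mono[OF card_UN_le[OF assms, of A]] by simp

lemma sum_power_half_le: "(\<Sum>s\<in>{k..<M}. (1/2::real) ^ s) \<le> 2 * (1/2) ^ k"
proof (cases "k \<le> M")
  case True
  have "(\<Sum>s\<in>{k..<M}. (1/2::real) ^ s) = 2 * (1/2) ^ k - 2 * (1/2) ^ M"
    using True by (induction M rule: dec_induct) simp_all
  then show ?thesis by simp
qed simp

lemma power_div_fact_le_exp:
  fixes x :: real
  assumes "x \<ge> 0"
  shows "x ^ n / fact n \<le> exp x"
proof -
  have "(\<lambda>k. x ^ k / fact k) sums exp x"
    using exp_converges[of x] by (simp add: scaleR_conv_of_real divide_inverse mult.commute)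
  then show ?thesis
    using sum_le_suminf[of "\<lambda>k. x ^ k / fact k" "{n}"] assms by (simp add: sums_iff)
qed

lemma binomial_le_exp_pow:
  assumes "s \<ge> 1"
  shows "real (n choose s) \<le> (exp 1 * real n / real s) ^ s"
proof (cases "s \<le> n")
  case True
  have "fact s * (n choose s) = fact n div fact (n - s)"
    using binomial_fact_lemma[OF True] by (metis mult.assoc mult.commute nonzero_mult_div_cancel_left
        fact_nonzero)
  also have "\<dots> \<le> n ^ s" by (rule fact_div_fact_le_pow[OF True])
  finally have "fact s * real (n choose s) \<le> real n ^ s"
    by (metis of_nat_fact of_nat_le_iff of_nat_mult of_nat_power)
  then have "real (n choose s) \<le> real n ^ s / fact s"
    by (simp add: pos_le_divide_eq mult.commute)
  also have "\<dots> = (real n / real s) ^ s * (real s ^ s / fact s)"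
    using assms by (simp add: power_divide)
  also have "\<dots> \<le> (real n / real s) ^ s * exp (real s)"
    by (intro mult_left_mono power_div_fact_le_exp) auto
  also have "\<dots> = (exp 1 * real n / real s) ^ s"
    using exp_of_nat_mult[of s "1::real"] by (simp add: power_mult_distrib power_divide)
  finally show ?thesis .
qed (simp add: binomial_eq_0)

lemma binomial_mul_binomial_le:
  assumes "1 \<le> s" "s \<le> u" "u \<le> 2 * s" "s \<le> n"
  shows "real (n choose s) * real (n choose u) \<le> (exp 1 * real n / real s) ^ (3 * s)"
proof -
  define q where "q = exp 1 * real n / real s"
  have "real s \<le> 1 * real n"
    using assms by simp
  also have "\<dots> \<le> exp 1 * real n"
    by (intro mult_right_mono) auto
  finally have "real s \<le> exp 1 * real n" .
  then have "1 \<le> q"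
    using assms by (simp add: q_def le_divide_eq)
  have "real (n choose u) \<le> (exp 1 * real n / real u) ^ u"
    using assms by (intro binomial_le_exp_pow) simp
  also have "\<dots> \<le> q ^ u"
    unfolding q_def using assms by (intro power_mono divide_left_mono) auto
  also have "\<dots> \<le> q ^ (2 * s)"
    using assms \<open>1 \<le> q\<close> by (intro power_increasing) auto
  finally have "real (n choose s) * real (n choose u) \<le> q ^ s * q ^ (2 * s)"
    using binomial_le_exp_pow[of s n] assms by (intro mult_mono) (auto simp: q_def)
  then show ?thesis
    by (simp add: q_def power_add[symmetric])
qed

(* The factors count the pairs (S, U) with |S| = s and |U| = u, and bound the probability that
   all ten matchings map S into U (see card_maps_into_le below). *)
lemma union_bound_term_le:
  fixes n s u :: nat
  assumes s: "5 \<le> s" and u: "s \<le> u" "u < 2 * s" and n: "30000 * s \<le> n"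
  shows "real (n choose s) * real (n choose u) * ((real u / (real n - 2 * real (s div 2))) ^ (s div 2)) ^ 10
           \<le> (1/4) ^ s"
proof -
  define x where "x = real s / real n"
  define b where "b = real u / (real n - 2 * real (s div 2))"
  have "real n > 0" using s n by simp
  then have x: "0 < x" "x \<le> 1 / 30000"
    using s n by (simp_all add: x_def field_simps)
  have half: "real n / 2 \<le> real n - 2 * real (s div 2)"
    using n by linarith
  then have "b \<le> real u / (real n / 2)"
    unfolding b_def using \<open>real n > 0\<close> by (intro divide_left_mono) auto
  also have "\<dots> \<le> 4 * x"
    using u \<open>real n > 0\<close> by (simp add: x_def field_simps)
  finally have b: "0 \<le> b" "b \<le> 4 * x" "4 * x \<le> 1"
    using half x \<open>real n > 0\<close> by (simp_all add: b_def)
  have "(b ^ (s div 2)) ^ 10 = b ^ (10 * (s div 2))"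
    by (simp add: power_mult[symmetric] mult.commute)
  also have "\<dots> \<le> b ^ (4 * s)"
    using b s by (intro power_decreasing) auto
  also have "\<dots> \<le> (4 * x) ^ (4 * s)"
    using b by (intro power_mono) auto
  finally have ratio: "(b ^ (s div 2)) ^ 10 \<le> (4 * x) ^ (4 * s)" .
  have "real (n choose s) * real (n choose u) * (b ^ (s div 2)) ^ 10
          \<le> (exp 1 / x) ^ (3 * s) * (4 * x) ^ (4 * s)"
    using binomial_mul_binomial_le[of s u n] s u n ratio x
    by (intro mult_mono) (auto simp: x_def)
  also have "\<dots> = ((exp 1 / x) ^ 3 * (4 * x) ^ 4) ^ s"
    by (simp only: power_mult power_mult_distrib)
  also have "(exp 1 / x) ^ 3 * (4 * x) ^ 4 = 256 * exp 1 ^ 3 * x"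
    using x by (simp add: power_divide power_mult_distrib field_simps eval_nat_numeral)
  also have "(256 * exp 1 ^ 3 * x) ^ s \<le> (1/4) ^ s"
  proof (intro power_mono)
    have "exp (1::real) ^ 3 \<le> 3 ^ 3" by (intro power_mono exp_le) simp
    then have "exp 1 ^ 3 * x \<le> 27 * (1 / 30000)"
      using x by (intro mult_mono) auto
    then show "256 * exp 1 ^ 3 * x \<le> 1/4" by simp
  qed (use x in simp)
  finally show ?thesis by (simp add: b_def)
qed

lemma prob_pmf_of_set_ge:
  assumes "finite \<Omega>" "\<Omega> \<noteq> {}" "B \<subseteq> \<Omega>" "\<Omega> - B \<subseteq> A" "real (card B) \<le> p * real (card \<Omega>)"
  shows "1 - p \<le> measure_pmf.prob (pmf_of_set \<Omega>) A"
proof -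
  have "card \<Omega> > 0" using assms(1,2) by (simp add: card_gt_0_iff)
  have "1 - p \<le> (real (card \<Omega>) - real (card B)) / real (card \<Omega>)"
    using assms(5) \<open>card \<Omega> > 0\<close> by (simp add: field_simps)
  also have "\<dots> = measure_pmf.prob (pmf_of_set \<Omega>) (\<Omega> - B)"
    using assms(1-3) by (simp add: measure_pmf_of_set Int_absorb1 card_Diff_subset finite_subset of_nat_diff
        card_mono)
  also have "\<dots> \<le> measure_pmf.prob (pmf_of_set \<Omega>) A"
    using assms(4) by (intro measure_pmf.finite_measure_mono) auto
  finally show ?thesis .
qed

section \<open>Perfect matchings of a finite set\<close>

definition matchings_on :: "'a set \<Rightarrow> ('a \<Rightarrow> 'a) set" where
  "matchings_on A =
     {f. (\<forall>i\<in>A. f i \<in> A \<and> f i \<noteq> i \<and> f (f i) = i) \<and> (\<forall>i. i \<notin> A \<longrightarrow> f i = i)}"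

lemma perfect_matchings_eq_matchings_on: "perfect_matchings n = matchings_on {..<n}"
  unfolding perfect_matchings_def matchings_on_def by auto

lemma finite_matchings_on:
  assumes "finite A"
  shows "finite (matchings_on A)"
proof -
  have "matchings_on A \<subseteq> (\<lambda>g i. if i \<in> A then g i else i) ` (A \<rightarrow>\<^sub>E A)"
  proof
    fix f assume f: "f \<in> matchings_on A"
    then have "f = (\<lambda>i. if i \<in> A then restrict f A i else i)" and "restrict f A \<in> A \<rightarrow>\<^sub>E A"
      by (auto simp: matchings_on_def)
    then show "f \<in> (\<lambda>g i. if i \<in> A then g i else i) ` (A \<rightarrow>\<^sub>E A)" by blast
  qed
  then show ?thesis
    using assms by (blast intro: finite_subset finite_PiE)
qed

lemma matchings_on_insert_pair:
  assumes "g \<in> matchings_on (A - {x, y})" "x \<in> A" "y \<in> A" "x \<noteq> y"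
  shows "g(x := y, y := x) \<in> matchings_on A"
  using assms by (auto simp: matchings_on_def)

lemma matchings_on_delete_pair:
  assumes f: "f \<in> matchings_on A" "f x = y" "x \<in> A"
  shows "f(x := x, y := y) \<in> matchings_on (A - {x, y})"
  unfolding matchings_on_def
proof (intro CollectI conjI ballI allI impI)
  have f_in: "f i \<in> A" "f i \<noteq> i" "f (f i) = i" if "i \<in> A" for i
    using f(1) that by (auto simp: matchings_on_def)
  fix i assume i: "i \<in> A - {x, y}"
  then have "f i \<noteq> x" "f i \<noteq> y"
    using f_in[of i] f_in[of x] f(2,3) by auto
  then show "(f(x := x, y := y)) i \<in> A - {x, y}" "(f(x := x, y := y)) i \<noteq> i"
    "(f(x := x, y := y)) ((f(x := x, y := y)) i) = i"
    using f_in[of i] i by auto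
next
  fix i assume "i \<notin> A - {x, y}"
  then show "(f(x := x, y := y)) i = i"
    using f(1) by (auto simp: matchings_on_def)
qed

lemma bij_betw_matchings_on_partner:
  assumes "x \<in> A" "y \<in> A" "y \<noteq> x"
  shows "bij_betw (\<lambda>f. f(x := x, y := y)) {f \<in> matchings_on A. f x = y \<and> P f}
           {g \<in> matchings_on (A - {x, y}). P (g(x := y, y := x))}"
proof (rule bij_betw_byWitness[where f' = "\<lambda>g. g(x := y, y := x)"])
  show "\<forall>f \<in> {f \<in> matchings_on A. f x = y \<and> P f}. (f(x := x, y := y))(x := y, y := x) = f"
    using assms by (auto simp: matchings_on_def fun_eq_iff)
  show "\<forall>g \<in> {g \<in> matchings_on (A - {x, y}). P (g(x := y, y := x))}. (g(x := y, y := x))(x := x, y := y) = g"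
    by (auto simp: matchings_on_def fun_eq_iff)
  show "(\<lambda>f. f(x := x, y := y)) ` {f \<in> matchings_on A. f x = y \<and> P f}
      \<subseteq> {g \<in> matchings_on (A - {x, y}). P (g(x := y, y := x))}"
  proof (intro image_subsetI CollectI conjI)
    fix f assume f: "f \<in> {f \<in> matchings_on A. f x = y \<and> P f}"
    then show "f(x := x, y := y) \<in> matchings_on (A - {x, y})"
      using assms by (blast intro: matchings_on_delete_pair)
    have "(f(x := x, y := y))(x := y, y := x) = f"
      using f assms by (auto simp: matchings_on_def fun_eq_iff)
    then show "P ((f(x := x, y := y))(x := y, y := x))" using f by simp
  qed
  show "(\<lambda>g. g(x := y, y := x)) ` {g \<in> matchings_on (A - {x, y}). P (g(x := y, y := x))}
      \<subseteq> {f \<in> matchings_on A. f x = y \<and> P f}"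
    using assms by (auto intro: matchings_on_insert_pair)
qed

lemma card_matchings_on_split:
  assumes "finite A" "x \<in> A"
  shows "card {f \<in> matchings_on A. P f}
           = (\<Sum>y\<in>A - {x}. card {g \<in> matchings_on (A - {x, y}). P (g(x := y, y := x))})"
proof -
  have "{f \<in> matchings_on A. P f} = (\<Union>y\<in>A - {x}. {f \<in> matchings_on A. f x = y \<and> P f})"
    using assms(2) by (auto simp: matchings_on_def)
  then have "card {f \<in> matchings_on A. P f} = (\<Sum>y\<in>A - {x}. card {f \<in> matchings_on A. f x = y \<and> P f})"
    using assms by (simp add: card_UN_disjoint finite_matchings_on disjoint_iff)
  also have "\<dots> = (\<Sum>y\<in>A - {x}. card {g \<in> matchings_on (A - {x, y}). P (g(x := y, y := x))})"
    using assms by (intro sum.cong refl bij_betw_same_card[OF bij_betw_matchings_on_partner]) auto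
  finally show ?thesis .
qed

fun num_matchings :: "nat \<Rightarrow> nat" where
  "num_matchings 0 = 1"
| "num_matchings (Suc 0) = 0"
| "num_matchings (Suc (Suc n)) = Suc n * num_matchings n"

lemma card_matchings_on:
  assumes "finite A"
  shows "card (matchings_on A) = num_matchings (card A)"
  using assms
proof (induction "card A" arbitrary: A rule: less_induct)
  case less
  show ?case
  proof (cases "card A" rule: num_matchings.cases)
    case 1
    then have "matchings_on A = {id}"
      using less.prems by (auto simp: matchings_on_def)
    then show ?thesis using 1 by simp
  next
    case 2
    then obtain a where "A = {a}" by (auto simp: card_Suc_eq)
    then have "matchings_on A = {}" by (auto simp: matchings_on_def)
    then show ?thesis using 2 by simp
  next
    case (3 n)
    then obtain x where x: "x \<in> A" by (auto simp: card_Suc_eq)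
    have card_rem: "card (A - {x, y}) = n" if "y \<in> A - {x}" for y
      using that 3 x less.prems by (auto simp: card_Diff_subset)
    have "card (matchings_on A) = (\<Sum>y\<in>A - {x}. card (matchings_on (A - {x, y})))"
      using card_matchings_on_split[OF less.prems \<open>x \<in> A\<close>, of "\<lambda>_. True"] by simp
    also have "\<dots> = (\<Sum>y\<in>A - {x}. num_matchings n)"
      using less.hyps less.prems card_rem 3 by (intro sum.cong) auto
    finally show ?thesis using 3 x less.prems by simp
  qed
qed

lemma card_matchings_on_Diff_pair:
  assumes "finite A" "x \<in> A" "y \<in> A" "x \<noteq> y"
  shows "card (matchings_on A) = (card A - 1) * card (matchings_on (A - {x, y}))"
proof -
  have "card {x, y} \<le> card A" using assms by (intro card_mono) auto
  then obtain n where n: "card A = Suc (Suc n)"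
    using assms(4) by (metis card_2_iff le_iff_add add_2_eq_Suc)
  then show ?thesis
    using assms by (simp add: card_matchings_on card_Diff_subset finite_matchings_on)
qed

lemma card_matchings_on_into_split:
  assumes "finite A" "x \<in> S" "S \<subseteq> A"
  shows "card {f \<in> matchings_on A. \<forall>z\<in>S. f z \<in> U}
           \<le> (\<Sum>y\<in>(A - {x}) \<inter> U. card {g \<in> matchings_on (A - {x, y}). \<forall>z\<in>S - {x, y}. g z \<in> U})"
proof -
  have "card {f \<in> matchings_on A. \<forall>z\<in>S. f z \<in> U}
          = (\<Sum>y\<in>A - {x}. card {g \<in> matchings_on (A - {x, y}). \<forall>z\<in>S. (g(x := y, y := x)) z \<in> U})"
    using assms by (intro card_matchings_on_split) auto
  also have "\<dots> = (\<Sum>y\<in>(A - {x}) \<inter> U. card {g \<in> matchings_on (A - {x, y}). \<forall>z\<in>S. (g(x := y, y := x)) z \<in> U})"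
  proof (rule sum.mono_neutral_right)
    show "\<forall>y\<in>A - {x} - (A - {x}) \<inter> U.
            card {g \<in> matchings_on (A - {x, y}). \<forall>z\<in>S. (g(x := y, y := x)) z \<in> U} = 0"
    proof
      fix y assume "y \<in> A - {x} - (A - {x}) \<inter> U"
      then have "y \<notin> U" by blast
      then have empty: "{g \<in> matchings_on (A - {x, y}). \<forall>z\<in>S. (g(x := y, y := x)) z \<in> U} = {}"
        using assms(2) by force
      show "card {g \<in> matchings_on (A - {x, y}). \<forall>z\<in>S. (g(x := y, y := x)) z \<in> U} = 0"
        unfolding empty by simp
    qed
  qed (use assms(1) in auto)
  also have "\<dots> \<le> (\<Sum>y\<in>(A - {x}) \<inter> U. card {g \<in> matchings_on (A - {x, y}). \<forall>z\<in>S - {x, y}. g z \<in> U})"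
    using assms(1) by (intro sum_mono card_mono) (auto simp: finite_matchings_on)
  finally show ?thesis .
qed

(* Pick x in S. Its partner y must lie in U, and given y the rest is a uniform matching of
   A - {x, y} that must again map S - {x, y} into U. Each step pairs off two points, which is
   why only |S| / 2 steps are available. *)
lemma card_matchings_on_into_le:
  assumes "finite A" "finite U" "S \<subseteq> A" "2 * t \<le> card S" "2 * t < card A"
  shows "real (card {f \<in> matchings_on A. \<forall>z\<in>S. f z \<in> U})
           \<le> (real (card U) / (real (card A) - 2 * t)) ^ t * real (card (matchings_on A))"
  using assms(1,3-)
proof (induction t arbitrary: A S)
  case 0
  then show ?case by (simp add: card_mono finite_matchings_on)
next
  case (Suc t)
  obtain x where x: "x \<in> S" using Suc.prems(3) by fastforce
  then have "x \<in> A" using Suc.prems(2) by blast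
  define D where "D = real (card A) - 2 * real (Suc t)"
  define Q where "Q = (real (card U) / D) ^ t * (real (card (matchings_on A)) / D)"
  have "D > 0" "D \<le> real (card A) - 1" using Suc.prems(4) by (simp_all add: D_def)
  have fiber: "real (card {g \<in> matchings_on (A - {x, y}). \<forall>z\<in>S - {x, y}. g z \<in> U}) \<le> Q"
    if y: "y \<in> (A - {x}) \<inter> U" for y
  proof -
    have card_A: "card (A - {x, y}) = card A - 2"
      using y \<open>x \<in> A\<close> Suc.prems(1) by (auto simp: card_Diff_subset)
    have "card S - card {x, y} \<le> card (S - {x, y})"
      using Suc.prems(1,2) by (intro diff_card_le_card_Diff) auto
    moreover have "card {x, y} \<le> 2" by (simp add: card_insert_if)
    ultimately have "real (card {g \<in> matchings_on (A - {x, y}). \<forall>z\<in>S - {x, y}. g z \<in> U})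
        \<le> (real (card U) / (real (card (A - {x, y})) - 2 * t)) ^ t * real (card (matchings_on (A - {x, y})))"
      using Suc.IH[of "A - {x, y}" "S - {x, y}"] Suc.prems card_A by fastforce
    also have "real (card (A - {x, y})) - 2 * t = D"
      using card_A Suc.prems(4) by (simp add: D_def of_nat_diff)
    also have "real (card (matchings_on (A - {x, y}))) = real (card (matchings_on A)) / (real (card A) - 1)"
      using card_matchings_on_Diff_pair[OF Suc.prems(1) \<open>x \<in> A\<close>, of y] y Suc.prems(4)
      by (auto simp: of_nat_diff)
    also have "(real (card U) / D) ^ t * (real (card (matchings_on A)) / (real (card A) - 1)) \<le> Q"
      unfolding Q_def using \<open>D > 0\<close> \<open>D \<le> real (card A) - 1\<close>
      by (intro mult_left_mono divide_left_mono) auto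
    finally show ?thesis .
  qed
  have "real (card {f \<in> matchings_on A. \<forall>z\<in>S. f z \<in> U})
          \<le> (\<Sum>y\<in>(A - {x}) \<inter> U. real (card {g \<in> matchings_on (A - {x, y}). \<forall>z\<in>S - {x, y}. g z \<in> U}))"
    using card_matchings_on_into_split[OF Suc.prems(1) x Suc.prems(2), of U]
    by (simp flip: of_nat_sum)
  also have "\<dots> \<le> real (card ((A - {x}) \<inter> U)) * Q"
    using fiber by (rule sum_bounded_above)
  also have "\<dots> \<le> real (card U) * Q"
    using \<open>D > 0\<close> assms(2) by (intro mult_right_mono) (auto intro: card_mono simp: Q_def)
  also have "\<dots> = (real (card U) / D) ^ Suc t * real (card (matchings_on A))"
    by (simp add: Q_def)
  finally show ?case by (simp add: D_def)
qed

section \<open>Expansion of the random multigraph\<close>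

lemma num_matchings_pos: "even n \<Longrightarrow> num_matchings n > 0"
  by (induction n rule: num_matchings.induct) auto

lemma finite_graph_space: "finite (graph_space n)"
  unfolding graph_space_def perfect_matchings_eq_matchings_on
  by (intro finite_PiE finite_matchings_on) auto

lemma graph_space_nonempty:
  assumes "even n"
  shows "graph_space n \<noteq> {}"
proof -
  have "card (perfect_matchings n) > 0"
    using num_matchings_pos[OF assms] by (simp add: perfect_matchings_eq_matchings_on card_matchings_on)
  then show ?thesis
    unfolding graph_space_def by (auto simp: PiE_eq_empty_iff)
qed

lemma graph_space_matching:
  assumes "ms \<in> graph_space n" "j < 10" "u < n"
  shows "ms j u < n" "ms j u \<noteq> u" "ms j (ms j u) = u"
  using assms by (auto simp: graph_space_def perfect_matchings_def PiE_iff)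

definition maps_into :: "nat \<Rightarrow> nat set \<Rightarrow> nat set \<Rightarrow> (nat \<Rightarrow> nat \<Rightarrow> nat) set" where
  "maps_into n S U = {ms \<in> graph_space n. \<forall>j<10. \<forall>z\<in>S. ms j z \<in> U}"

lemma card_maps_into_le:
  assumes S: "S \<subseteq> {..<n}" and U: "U \<subseteq> {..<n}" and t: "2 * t \<le> card S" "2 * t < n"
  shows "real (card (maps_into n S U))
           \<le> ((real (card U) / (real n - 2 * t)) ^ t) ^ 10 * real (card (graph_space n))"
proof -
  define F where "F = {f \<in> perfect_matchings n. \<forall>z\<in>S. f z \<in> U}"
  have "maps_into n S U = {..<10} \<rightarrow>\<^sub>E F"
    unfolding maps_into_def graph_space_def F_def by (auto simp: PiE_iff extensional_def)
  then have "card (maps_into n S U) = card F ^ 10"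
    by (simp add: card_PiE)
  moreover have "card (graph_space n) = card (perfect_matchings n) ^ 10"
    by (simp add: graph_space_def card_PiE)
  moreover have "real (card F) \<le> (real (card U) / (real n - 2 * t)) ^ t * real (card (perfect_matchings n))"
    using card_matchings_on_into_le[of "{..<n}" U S t] S U t finite_subset
    unfolding F_def perfect_matchings_eq_matchings_on by auto
  then have "real (card F) ^ 10 \<le> ((real (card U) / (real n - 2 * t)) ^ t * real (card (perfect_matchings n))) ^ 10"
    by (intro power_mono) auto
  ultimately show ?thesis
    by (simp add: power_mult_distrib)
qed

lemma card_Union_maps_into_le:
  assumes s: "5 \<le> s" "30000 * s \<le> n" and u: "s \<le> u" "u < 2 * s"
  shows "real (card (\<Union>S\<in>{S. S \<subseteq> {..<n} \<and> card S = s}. \<Union>U\<in>{U. U \<subseteq> {..<n} \<and> card U = u}.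
                       maps_into n S U))
           \<le> (1/4) ^ s * real (card (graph_space n))"
proof -
  define R where "R = ((real u / (real n - 2 * real (s div 2))) ^ (s div 2)) ^ 10 * real (card (graph_space n))"
  have "real (card (\<Union>S\<in>{S. S \<subseteq> {..<n} \<and> card S = s}. \<Union>U\<in>{U. U \<subseteq> {..<n} \<and> card U = u}.
                       maps_into n S U))
      \<le> (\<Sum>S\<in>{S. S \<subseteq> {..<n} \<and> card S = s}. \<Sum>U\<in>{U. U \<subseteq> {..<n} \<and> card U = u}.
            real (card (maps_into n S U)))"
    by (intro order_trans[OF real_card_UN_le] sum_mono real_card_UN_le) auto
  also have "\<dots> \<le> (\<Sum>S\<in>{S. S \<subseteq> {..<n} \<and> card S = s}. \<Sum>U\<in>{U. U \<subseteq> {..<n} \<and> card U = u}. R)"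
    using card_maps_into_le[of _ n _ "s div 2"] s unfolding R_def by (intro sum_mono) auto
  also have "\<dots> = real (n choose s) * real (n choose u) * R"
    by (simp add: n_subsets)
  also have "\<dots> \<le> (1/4) ^ s * real (card (graph_space n))"
    unfolding R_def mult.assoc[symmetric]
    by (intro mult_right_mono union_bound_term_le) (use s u in auto)
  finally show ?thesis .
qed

definition closed_nbhd :: "(nat \<Rightarrow> nat \<Rightarrow> nat) \<Rightarrow> nat set \<Rightarrow> nat set" where
  "closed_nbhd ms S = S \<union> (\<Union>j<10. ms j ` S)"

definition expanding :: "nat \<Rightarrow> nat \<Rightarrow> nat \<Rightarrow> (nat \<Rightarrow> nat \<Rightarrow> nat) \<Rightarrow> bool" where
  "expanding n k M ms \<longleftrightarrow>
     (\<forall>S \<subseteq> {..<n}. k \<le> card S \<longrightarrow> card S < M \<longrightarrow> 2 * card S \<le> card (closed_nbhd ms S))"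

lemma closed_nbhd_subset:
  assumes "ms \<in> graph_space n" "S \<subseteq> {..<n}"
  shows "closed_nbhd ms S \<subseteq> {..<n}"
  using assms graph_space_matching(1) by (fastforce simp: closed_nbhd_def)

lemma not_expanding_subset:
  "{ms \<in> graph_space n. \<not> expanding n k M ms}
     \<subseteq> (\<Union>s\<in>{k..<M}. \<Union>u\<in>{s..<2 * s}.
           \<Union>S\<in>{S. S \<subseteq> {..<n} \<and> card S = s}. \<Union>U\<in>{U. U \<subseteq> {..<n} \<and> card U = u}. maps_into n S U)"
proof
  fix ms assume "ms \<in> {ms \<in> graph_space n. \<not> expanding n k M ms}"
  then obtain S where ms: "ms \<in> graph_space n" and S: "S \<subseteq> {..<n}" "k \<le> card S" "card S < M"
    and small: "card (closed_nbhd ms S) < 2 * card S"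
    unfolding expanding_def by auto
  have U: "closed_nbhd ms S \<subseteq> {..<n}"
    using closed_nbhd_subset[OF ms S(1)] .
  then have "card S \<le> card (closed_nbhd ms S)"
    by (intro card_mono) (auto intro: finite_subset simp: closed_nbhd_def)
  moreover have "ms \<in> maps_into n S (closed_nbhd ms S)"
    using ms by (auto simp: maps_into_def closed_nbhd_def)
  ultimately show "ms \<in> (\<Union>s\<in>{k..<M}. \<Union>u\<in>{s..<2 * s}.
           \<Union>S\<in>{S. S \<subseteq> {..<n} \<and> card S = s}. \<Union>U\<in>{U. U \<subseteq> {..<n} \<and> card U = u}. maps_into n S U)"
    using S small U by (intro UN_I) auto
qed

lemma card_not_expanding_le:
  assumes k: "5 \<le> k" and M: "30000 * M \<le> n"
  shows "real (card {ms \<in> graph_space n. \<not> expanding n k M ms}) \<le> 2 * (1/2) ^ k * real (card (graph_space n))"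
proof -
  define G where "G = real (card (graph_space n))"
  define X where "X s u = (\<Union>S\<in>{S. S \<subseteq> {..<n} \<and> card S = s}. \<Union>U\<in>{U. U \<subseteq> {..<n} \<and> card U = u}.
       maps_into n S U)" for s u
  have "real (card {ms \<in> graph_space n. \<not> expanding n k M ms}) \<le> real (card (\<Union>s\<in>{k..<M}. \<Union>u\<in>{s..<2 * s}. X s u))"
    using not_expanding_subset unfolding X_def
    by (intro of_nat_mono card_mono) (auto simp: maps_into_def finite_graph_space)
  also have "\<dots> \<le> (\<Sum>s\<in>{k..<M}. \<Sum>u\<in>{s..<2 * s}. real (card (X s u)))"
    by (intro order_trans[OF real_card_UN_le] sum_mono real_card_UN_le) auto
  also have "\<dots> \<le> (\<Sum>s\<in>{k..<M}. \<Sum>u\<in>{s..<2 * s}. (1/4) ^ s * G)"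
    unfolding X_def G_def using k M by (intro sum_mono card_Union_maps_into_le) auto
  also have "\<dots> \<le> (\<Sum>s\<in>{k..<M}. (1/2) ^ s * G)"
  proof (intro sum_mono)
    fix s
    have "real s * (1/2) ^ s \<le> 1"
      using less_exp[of s] by (simp add: field_simps)
    then have "real s * (1/2) ^ s * ((1/2) ^ s * G) \<le> (1/2) ^ s * G"
      by (intro mult_left_le_one_le) (auto simp: G_def)
    moreover have "(1/4::real) ^ s = (1/2) ^ s * (1/2) ^ s"
      by (simp flip: power_mult_distrib)
    then have "(\<Sum>u\<in>{s..<2 * s}. (1/4) ^ s * G) = real s * (1/2) ^ s * ((1/2) ^ s * G)"
      by (simp add: mult.assoc)
    ultimately show "(\<Sum>u\<in>{s..<2 * s}. (1/4) ^ s * G) \<le> (1/2) ^ s * G"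
      by linarith
  qed
  also have "\<dots> \<le> 2 * (1/2) ^ k * G"
    using sum_power_half_le[of k M] by (simp add: G_def sum_distrib_right[symmetric] mult_right_mono)
  finally show ?thesis by (simp add: G_def)
qed

section \<open>Balls and layers around the terminals\<close>

lemma ball_mono: "i \<le> j \<Longrightarrow> ball n ms T i \<subseteq> ball n ms T j"
  unfolding ball_def by (blast intro: order_trans)

lemma ball_subset: "ball n ms T i \<subseteq> {..<n}"
  unfolding ball_def by blast

lemma finite_ball: "finite (ball n ms T i)"
  by (rule finite_subset[OF ball_subset]) simp

lemma ball_0: "T \<subseteq> {..<n} \<Longrightarrow> ball n ms T 0 = T"
  unfolding ball_def by auto

lemma closed_nbhd_ball_subset:
  assumes ms: "ms \<in> graph_space n"
  shows "closed_nbhd ms (ball n ms T i) \<subseteq> ball n ms T (Suc i)"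
proof -
  have "ms j u \<in> ball n ms T (Suc i)" if u: "u \<in> ball n ms T i" and j: "j < 10" for u j
  proof -
    obtain t d where "u < n" "t \<in> T" "d \<le> i" "(u, t) \<in> adj n ms ^^ d"
      using u unfolding ball_def by blast
    moreover have "(ms j u, u) \<in> adj n ms" "ms j u < n"
      using graph_space_matching[OF ms j \<open>u < n\<close>] j unfolding adj_def by auto
    ultimately have "(ms j u, t) \<in> adj n ms ^^ Suc d" "Suc d \<le> Suc i" "ms j u < n"
      using relpow_Suc_I2 by auto
    then show ?thesis
      unfolding ball_def using \<open>t \<in> T\<close> by blast
  qed
  moreover have "ball n ms T i \<subseteq> ball n ms T (Suc i)"
    by (rule ball_mono) simp
  ultimately show ?thesis
    unfolding closed_nbhd_def by blast
qed

lemma ball_growth: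
  assumes ms: "ms \<in> graph_space n" and exp: "expanding n k M ms"
    and T: "T \<subseteq> {..<n}" "card T = k"
  shows "min M (2 ^ i * k) \<le> card (ball n ms T i)"
proof (induction i)
  case 0
  then show ?case using ball_0[OF T(1)] T(2) by simp
next
  case (Suc i)
  show ?case
  proof (cases "card (ball n ms T i) < M")
    case True
    then have "2 ^ i * k \<le> card (ball n ms T i)"
      using Suc.IH by (simp add: min_def split: if_splits)
    moreover have "k \<le> card (ball n ms T i)"
      using ball_mono[of 0 i] ball_0[OF T(1)] T(2) by (metis card_mono finite_ball zero_le)
    then have "2 * card (ball n ms T i) \<le> card (closed_nbhd ms (ball n ms T i))"
      using exp True ball_subset unfolding expanding_def by blast
    ultimately have "2 ^ Suc i * k \<le> card (closed_nbhd ms (ball n ms T i))"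
      by simp
    also have "\<dots> \<le> card (ball n ms T (Suc i))"
      by (intro card_mono finite_ball closed_nbhd_ball_subset ms)
    finally show ?thesis by simp
  next
    case False
    moreover have "card (ball n ms T i) \<le> card (ball n ms T (Suc i))"
      by (intro card_mono finite_ball ball_mono) simp
    ultimately show ?thesis by linarith
  qed
qed

lemma layer_subset_ball: "layer n ms T i \<subseteq> ball n ms T i"
  by (cases i) auto

lemma finite_layer: "finite (layer n ms T i)"
  by (rule finite_subset[OF layer_subset_ball finite_ball])

lemma layer_subset: "layer n ms T i \<subseteq> {..<n}"
  using ball_subset layer_subset_ball by blast

lemma layer_unique:
  assumes "u \<in> layer n ms T i" "u \<in> layer n ms T i'"
  shows "i = i'"
proof (rule ccontr)
  have disjoint: False if "a < b" "u \<in> layer n ms T a" "u \<in> layer n ms T b" for a b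
  proof -
    obtain b' where b: "b = Suc b'" "a \<le> b'" using \<open>a < b\<close> by (cases b) auto
    then have "u \<in> ball n ms T b'"
      using that(2) ball_mono layer_subset_ball by blast
    then show False
      using that(3) b by simp
  qed
  assume "i \<noteq> i'"
  then show False
    using assms disjoint by (meson linorder_neqE_nat)
qed

lemma card_ball_reaches:
  assumes ms: "ms \<in> graph_space n" and exp: "expanding n k M ms"
    and T: "T \<subseteq> {..<n}" "card T = k" and "1 \<le> k"
  shows "M \<le> card (ball n ms T M)"
proof -
  have "M < 2 ^ M * k"
    using less_exp[of M] \<open>1 \<le> k\<close> by (metis dual_order.strict_trans1 mult.right_neutral mult_le_mono2)
  then show ?thesis
    using ball_growth[OF ms exp T, of M] by (simp add: min_def split: if_splits)
qed

lemma r_param_bounds: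
  assumes ms: "ms \<in> graph_space n" and exp: "expanding n k (2 * m_param \<alpha> n) ms"
    and T: "T \<subseteq> {..<n}" "card T = k" and r: "0 < r_param \<alpha> n ms T"
  shows "card (layer n ms T (r_param \<alpha> n ms T)) < 2 * m_param \<alpha> n"
    and "2 ^ r_param \<alpha> n ms T * k < 2 * m_param \<alpha> n"
proof -
  let ?r = "r_param \<alpha> n ms T"
  have "?r < (LEAST i. 2 * m_param \<alpha> n \<le> card (ball n ms T i))"
    using r unfolding r_param_def by simp
  then have ball_r: "card (ball n ms T ?r) < 2 * m_param \<alpha> n"
    using not_less_Least by fastforce
  moreover have "card (layer n ms T ?r) \<le> card (ball n ms T ?r)"
    by (intro card_mono finite_ball layer_subset_ball)
  ultimately show "card (layer n ms T ?r) < 2 * m_param \<alpha> n" by linarith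
  show "2 ^ ?r * k < 2 * m_param \<alpha> n"
    using ball_growth[OF ms exp T, of ?r] ball_r by (simp add: min_def split: if_splits)
qed

section \<open>Capacities\<close>

lemma finite_inner_set: "finite (inner_set n ms T r)"
proof (rule finite_subset)
  show "inner_set n ms T r \<subseteq> {..<n}"
    unfolding inner_set_def using layer_subset by blast
qed simp

(* Loads are only passed from layer r - d to layer r - d - 1 along the chosen edges, so the loads
   of every layer add up to at most the number of edges between N_r and N_(r+1). *)
lemma sum_load_layer_le:
  "(\<Sum>u\<in>layer n ms T (r - d). load n ms T r \<sigma> d u) \<le> 10 * card (layer n ms T r)"
proof (induction d)
  case 0
  have "load n ms T r \<sigma> 0 u \<le> 10" for u
    using card_mono[of "{..<10::nat}" "{j. j < 10 \<and> ms j u \<in> layer n ms T (Suc r)}"] by auto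
  then show ?case
    using sum_mono[of "layer n ms T r" "load n ms T r \<sigma> 0" "\<lambda>_. 10"] by simp
next
  case (Suc d)
  define X where "X = layer n ms T (r - d)"
  define Y where "Y = layer n ms T (r - Suc d)"
  define f where "f w = ms (\<sigma> w) w" for w
  have "(\<Sum>u\<in>Y. load n ms T r \<sigma> (Suc d) u) = (\<Sum>u\<in>Y. \<Sum>w\<in>{w \<in> {w\<in>X. f w \<in> Y}. f w = u}. load n ms T r \<sigma> d w)"
    by (intro sum.cong refl) (auto simp: X_def f_def intro!: sum.cong)
  also have "\<dots> = (\<Sum>w\<in>{w\<in>X. f w \<in> Y}. load n ms T r \<sigma> d w)"
    by (rule sum.group) (auto simp: X_def Y_def finite_layer)
  also have "\<dots> \<le> (\<Sum>w\<in>X. load n ms T r \<sigma> d w)"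
    by (rule sum_mono2) (auto simp: X_def finite_layer)
  finally show ?case
    using Suc.IH unfolding X_def Y_def by linarith
qed

(* e_u = e_w forces u and w to be the two endpoints of one edge, but each e_u goes one layer
   down from u. *)
lemma chosen_edge_inj_on:
  assumes ms: "ms \<in> graph_space n" and \<sigma>: "valid_choice n ms T r \<sigma>"
  shows "inj_on (chosen_edge ms \<sigma>) (inner_set n ms T r)"
proof (rule inj_onI)
  fix u u' assume u: "u \<in> inner_set n ms T r" and u': "u' \<in> inner_set n ms T r"
    and eq: "chosen_edge ms \<sigma> u = chosen_edge ms \<sigma> u'"
  obtain i where i: "1 \<le> i" "i \<le> r" "u \<in> layer n ms T i"
    using u unfolding inner_set_def by blast
  obtain i' where i': "1 \<le> i'" "i' \<le> r" "u' \<in> layer n ms T i'"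
    using u' unfolding inner_set_def by blast
  define j where "j = \<sigma> u"
  have j: "\<sigma> u' = j" "min u (ms j u) = min u' (ms j u')"
    using eq by (auto simp: chosen_edge_def j_def)
  have "\<sigma> u < 10 \<and> ms (\<sigma> u) u \<in> layer n ms T (i - 1)"
    "ms (\<sigma> u') u' \<in> layer n ms T (i' - 1)"
    using \<sigma> i i' unfolding valid_choice_def by blast+
  then have valid: "j < 10" "ms j u \<in> layer n ms T (i - 1)" "ms j u' \<in> layer n ms T (i' - 1)"
    using j(1) unfolding j_def by auto
  have inv: "ms j (ms j u) = u" "ms j (ms j u') = u'"
    using graph_space_matching(3)[OF ms valid(1)] layer_subset i(3) i'(3) by blast+
  have "u' = u \<or> u' = ms j u \<or> ms j u' = u \<or> ms j u' = ms j u"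
    using j(2) by (auto simp: min_def split: if_splits)
  then have "u' = u \<or> u' = ms j u"
    using inv by metis
  moreover have "u' \<noteq> ms j u"
  proof
    assume u'_eq: "u' = ms j u"
    then have "i' = i - 1"
      using layer_unique i'(3) valid(2) by blast
    moreover have "i = i' - 1"
      using layer_unique i(3) valid(3) inv(1) u'_eq by metis
    ultimately show False using i(1) by simp
  qed
  ultimately show "u = u'" by simp
qed

lemma cprime_chosen_edge:
  assumes ms: "ms \<in> graph_space n" and \<sigma>: "valid_choice n ms T r \<sigma>"
    and u: "u \<in> layer n ms T i" "1 \<le> i" "i \<le> r"
  shows "cprime n ms T r \<sigma> (chosen_edge ms \<sigma> u) = load n ms T r \<sigma> (r - i) u"
proof -
  have u_inner: "u \<in> inner_set n ms T r"
    using u unfolding inner_set_def by blast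
  have "(THE u'. u' \<in> inner_set n ms T r \<and> chosen_edge ms \<sigma> u' = chosen_edge ms \<sigma> u) = u"
    using u_inner inj_onD[OF chosen_edge_inj_on[OF ms \<sigma>]] by blast
  moreover have "(THE i'. u \<in> layer n ms T i') = i"
    using u(1) layer_unique by blast
  ultimately show ?thesis
    unfolding cprime_def Let_def by simp
qed

lemma total_capacity_le:
  assumes ms: "ms \<in> graph_space n" and \<sigma>: "valid_choice n ms T r \<sigma>"
  shows "total_capacity n ms T r \<sigma> \<le> 10 * n + 10 * r * card (layer n ms T r)"
proof -
  let ?E = "edges n ms" and ?ET = "ET n ms T r \<sigma>" and ?c = "cprime n ms T r \<sigma>"
  have E: "?E \<subseteq> {..<10} \<times> {..<n}"
    unfolding edges_def by auto
  then have "finite ?E" by (rule finite_subset) simp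
  have "total_capacity n ms T r \<sigma> \<le> (\<Sum>e\<in>?E. 1 + (if e \<in> ?ET then ?c e else 0))"
    unfolding total_capacity_def capacity_def by (intro sum_mono) auto
  also have "\<dots> = card ?E + (\<Sum>e\<in>?E. if e \<in> ?ET then ?c e else 0)"
    by (simp only: sum.distrib) simp
  also have "(\<Sum>e\<in>?E. if e \<in> ?ET then ?c e else 0) = (\<Sum>e\<in>?E \<inter> ?ET. ?c e)"
    using \<open>finite ?E\<close> by (simp add: sum.If_cases)
  also have "card ?E \<le> 10 * n"
    using card_mono[OF _ E] by (simp add: card_cartesian_product)
  also have "(\<Sum>e\<in>?E \<inter> ?ET. ?c e) \<le> (\<Sum>e\<in>?ET. ?c e)"
    by (intro sum_mono2) (auto simp: ET_def finite_inner_set)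
  also have "\<dots> = (\<Sum>u\<in>inner_set n ms T r. ?c (chosen_edge ms \<sigma> u))"
    unfolding ET_def by (intro sum.reindex[unfolded comp_def] chosen_edge_inj_on ms \<sigma>)
  also have "inner_set n ms T r = (\<Union>i\<in>{1..r}. layer n ms T i)"
    unfolding inner_set_def by auto
  also have "(\<Sum>u\<in>(\<Union>i\<in>{1..r}. layer n ms T i). ?c (chosen_edge ms \<sigma> u))
      = (\<Sum>i\<in>{1..r}. \<Sum>u\<in>layer n ms T i. ?c (chosen_edge ms \<sigma> u))"
    by (rule sum.UNION_disjoint) (auto simp: finite_layer dest: layer_unique)
  also have "\<dots> = (\<Sum>i\<in>{1..r}. \<Sum>u\<in>layer n ms T (r - (r - i)). load n ms T r \<sigma> (r - i) u)"
    using cprime_chosen_edge[OF ms \<sigma>] by (intro sum.cong) auto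
  also have "\<dots> \<le> (\<Sum>i\<in>{1..r}. 10 * card (layer n ms T r))"
    by (intro sum_mono sum_load_layer_le)
  finally show ?thesis by simp
qed

section \<open>Parameters and asymptotics\<close>

lemma k_param_ge: "real n / 2 powr (log 2 (real n) powr \<alpha>) - 1 \<le> real (k_param \<alpha> n)"
proof -
  have "real (k_param \<alpha> n) = real_of_int \<lfloor>real n / 2 powr (log 2 (real n) powr \<alpha>)\<rfloor>"
    unfolding k_param_def by simp
  then show ?thesis by linarith
qed

lemma m_param_le: "real (m_param \<alpha> n) \<le> 10 * real n / log 2 (real n) powr \<alpha>"
proof -
  have "real (m_param \<alpha> n) = real_of_int \<lfloor>10 * real n / log 2 (real n) powr \<alpha>\<rfloor>"
    unfolding m_param_def by simp
  then show ?thesis by linarith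
qed

(* Used with x = n and a = (log n)^alpha: starting from k, about n / 2^a, r doublings stay below
   2m, about 20 n / a, only if r < a. *)
lemma doubling_steps_lt:
  fixes a x :: real and r k M :: nat
  assumes a: "40 \<le> a" and x: "2 \<le> x / 2 powr a"
    and k: "x / 2 powr a - 1 \<le> real k" and M: "real M \<le> 20 * x / a" and doubling: "2 ^ r * k < M"
  shows "real r < a"
proof -
  have "2 * 2 powr a \<le> x" using x by (simp add: le_divide_eq)
  then have "x > 0" using powr_gt_zero[of 2 a] by linarith
  have "x / (2 * 2 powr a) \<le> real k"
    using x k by (simp add: field_simps)
  then have "2 ^ r * (x / (2 * 2 powr a)) \<le> 2 ^ r * real k"
    by (intro mult_left_mono) auto
  also have "2 ^ r * real k < 20 * x / a"
  proof -
    have "real (2 ^ r * k) < real M" using doubling by (simp only: of_nat_less_iff)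
    then have "2 ^ r * real k < real M" by simp
    then show ?thesis using M by linarith
  qed
  finally have "2 ^ r < 40 / a * 2 powr a"
    using \<open>x > 0\<close> a by (simp add: field_simps)
  also have "\<dots> \<le> 1 * 2 powr a"
    using a by (intro mult_right_mono) auto
  finally show ?thesis
    by (simp add: powr_realpow[symmetric])
qed

lemma good_event_if_expanding:
  fixes \<alpha> :: real and n :: nat
  defines "a \<equiv> log 2 (real n) powr \<alpha>"
  assumes ms: "ms \<in> graph_space n" and T: "T \<subseteq> {..<n}" "card T = k_param \<alpha> n"
    and a: "40 \<le> a" and big: "6 \<le> real n / 2 powr a"
    and exp: "expanding n (k_param \<alpha> n) (2 * m_param \<alpha> n) ms"
  shows "good_event \<alpha> 210 n T ms"
proof -
  define r where "r = r_param \<alpha> n ms T"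
  have k: "real n / 2 powr a - 1 \<le> real (k_param \<alpha> n)" and "1 \<le> k_param \<alpha> n"
    using k_param_ge[of n \<alpha>] big by (simp_all add: a_def)
  have M: "real (2 * m_param \<alpha> n) \<le> 20 * real n / a"
    using m_param_le[of \<alpha> n] by (simp add: a_def)
  have "real (10 * r * card (layer n ms T r)) \<le> 200 * real n"
  proof (cases "r = 0")
    case False
    then have layer: "card (layer n ms T r) < 2 * m_param \<alpha> n"
      and "2 ^ r * k_param \<alpha> n < 2 * m_param \<alpha> n"
      using r_param_bounds[OF ms exp T] by (simp_all add: r_def)
    then have "real r < a"
      using doubling_steps_lt[OF a _ k M] big by simp
    have "real (10 * r * card (layer n ms T r)) = 10 * (real r * real (card (layer n ms T r)))"
      by simp
    also have "\<dots> \<le> 10 * (a * real (2 * m_param \<alpha> n))"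
      using \<open>real r < a\<close> layer by (intro mult_left_mono mult_mono) auto
    also have "\<dots> \<le> 10 * (a * (20 * real n / a))"
      using M a by (intro mult_left_mono) auto
    also have "\<dots> = 200 * real n" using a by simp
    finally show ?thesis .
  qed simp
  moreover have "real (total_capacity n ms T r \<sigma>) \<le> real (10 * n + 10 * r * card (layer n ms T r))"
    if "valid_choice n ms T r \<sigma>" for \<sigma>
    using total_capacity_le[OF ms that] by (rule of_nat_mono)
  moreover have "2 * m_param \<alpha> n \<le> card (ball n ms T (2 * m_param \<alpha> n))"
    using card_ball_reaches[OF ms exp T \<open>1 \<le> k_param \<alpha> n\<close>] .
  ultimately show ?thesis
    unfolding good_event_def r_def by fastforce
qed

lemma good_prob_ge:
  fixes \<alpha> :: real and n :: nat
  defines "a \<equiv> log 2 (real n) powr \<alpha>"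
  assumes n: "even n" and T: "T \<subseteq> {..<n}" "card T = k_param \<alpha> n"
    and a: "600000 \<le> a" and big: "6 \<le> real n / 2 powr a"
  shows "1 - 2 * (1/2) ^ k_param \<alpha> n \<le> good_prob \<alpha> 210 n T"
proof -
  define M where "M = 2 * m_param \<alpha> n"
  have "5 \<le> k_param \<alpha> n"
    using k_param_ge[of n \<alpha>] big by (simp add: a_def)
  have "real (30000 * M) \<le> 30000 * (20 * real n / a)"
    using m_param_le[of \<alpha> n] by (simp add: M_def a_def)
  also have "\<dots> \<le> real n"
    using mult_right_mono[OF a, of "real n"] a by (simp add: field_simps mult.commute)
  finally have "30000 * M \<le> n" by (simp only: of_nat_le_iff)
  show ?thesis
    unfolding good_prob_def
  proof (rule prob_pmf_of_set_ge)
    show "graph_space n - {ms \<in> graph_space n. \<not> expanding n (k_param \<alpha> n) M ms}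
            \<subseteq> {ms. good_event \<alpha> 210 n T ms}"
      using good_event_if_expanding[OF _ T] a big by (auto simp: M_def a_def)
    show "real (card {ms \<in> graph_space n. \<not> expanding n (k_param \<alpha> n) M ms})
            \<le> 2 * (1/2) ^ k_param \<alpha> n * real (card (graph_space n))"
      using card_not_expanding_le[OF \<open>5 \<le> k_param \<alpha> n\<close> \<open>30000 * M \<le> n\<close>] .
  qed (use n finite_graph_space graph_space_nonempty in auto)
qed

(* Nothing about alpha beyond these bounds is used: they make both (log n)^alpha and
   n / 2^((log n)^alpha) tend to infinity. *)
lemma alpha_bounds:
  assumes "0 < \<epsilon>" "\<epsilon> < 1/10"
  shows "1/2 \<le> log 2 5 / (log 2 5 + 1 - \<epsilon>)" "log 2 5 / (log 2 5 + 1 - \<epsilon>) \<le> 4/5"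
proof -
  define l where "l = log 2 (5::real)"
  have "1 \<le> l" "l < 3"
    unfolding l_def by (simp_all add: log_less_iff powr_numeral)
  then have "0 < l + 1 - \<epsilon>" using assms by linarith
  then show "1/2 \<le> log 2 5 / (log 2 5 + 1 - \<epsilon>)" "log 2 5 / (log 2 5 + 1 - \<epsilon>) \<le> 4/5"
    using assms \<open>1 \<le> l\<close> \<open>l < 3\<close> by (simp_all add: l_def[symmetric] le_divide_eq divide_le_eq)
qed

lemma eventually_log_scale_large:
  fixes \<alpha> :: real
  assumes \<alpha>: "1/2 \<le> \<alpha>" "\<alpha> \<le> 4/5"
  shows "\<forall>\<^sub>F h in sequentially. L \<le> log 2 (real (2 * h)) powr \<alpha>
            \<and> K \<le> real (2 * h) / 2 powr (log 2 (real (2 * h)) powr \<alpha>)"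
proof -
  have "filterlim (\<lambda>h::nat. log 2 (real (2 * h)) powr (1/2)) at_top sequentially"
    and "filterlim (\<lambda>h::nat. real (2 * h) / 2 powr (log 2 (real (2 * h)) powr (4/5))) at_top sequentially"
    and "filterlim (\<lambda>h::nat. log 2 (real (2 * h))) at_top sequentially"
    by real_asymp+
  then have "\<forall>\<^sub>F h in sequentially. L \<le> log 2 (real (2 * h)) powr (1/2)
      \<and> K \<le> real (2 * h) / 2 powr (log 2 (real (2 * h)) powr (4/5)) \<and> 1 \<le> log 2 (real (2 * h))"
    by (simp add: filterlim_at_top eventually_conj_iff)
  then show ?thesis
  proof eventually_elim
    case (elim h)
    then have "log 2 (real (2 * h)) powr (1/2) \<le> log 2 (real (2 * h)) powr \<alpha>"
      and "2 powr (log 2 (real (2 * h)) powr \<alpha>) \<le> 2 powr (log 2 (real (2 * h)) powr (4/5))"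
      using \<alpha> by (simp_all add: powr_mono)
    then show ?case
      using elim by (smt (verit) divide_left_mono of_nat_0_le_iff powr_gt_zero mult_pos_pos)
  qed
qed

lemma k_param_at_top:
  fixes \<alpha> :: real
  assumes "1/2 \<le> \<alpha>" "\<alpha> \<le> 4/5"
  shows "filterlim (\<lambda>h. k_param \<alpha> (2 * h)) at_top sequentially"
  unfolding filterlim_at_top
proof
  fix Z :: nat
  show "\<forall>\<^sub>F h in sequentially. Z \<le> k_param \<alpha> (2 * h)"
    using eventually_log_scale_large[OF assms, of 0 "real Z + 1"]
  proof eventually_elim
    case (elim h)
    then show ?case
      using k_param_ge[of "2 * h" \<alpha>] by linarith
  qed
qed

lemma good_prob_tendsto_1:
  fixes \<alpha> :: real
  assumes \<alpha>: "1/2 \<le> \<alpha>" "\<alpha> \<le> 4/5"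
    and Ts: "\<forall>h. Ts h \<subseteq> {..<2 * h} \<and> card (Ts h) = k_param \<alpha> (2 * h)"
  shows "(\<lambda>h. good_prob \<alpha> 210 (2 * h) (Ts h)) \<longlonglongrightarrow> 1"
proof (rule tendsto_sandwich)
  show "\<forall>\<^sub>F h in sequentially. 1 - 2 * (1/2::real) ^ k_param \<alpha> (2 * h) \<le> good_prob \<alpha> 210 (2 * h) (Ts h)"
    using eventually_log_scale_large[OF \<alpha>, of 600000 6]
    by eventually_elim (rule good_prob_ge; use Ts in auto)
  show "\<forall>\<^sub>F h in sequentially. good_prob \<alpha> 210 (2 * h) (Ts h) \<le> 1"
    by (simp add: good_prob_def)
  have "(\<lambda>h. (1/2::real) ^ k_param \<alpha> (2 * h)) \<longlonglongrightarrow> 0"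
    by (rule filterlim_compose[OF LIMSEQ_realpow_zero k_param_at_top[OF \<alpha>]]) simp_all
  then have "(\<lambda>h. 1 - 2 * (1/2::real) ^ k_param \<alpha> (2 * h)) \<longlonglongrightarrow> 1 - 2 * 0"
    by (intro tendsto_intros)
  then show "(\<lambda>h. 1 - 2 * (1/2::real) ^ k_param \<alpha> (2 * h)) \<longlonglongrightarrow> 1"
    by simp
qed simp

theorem lemma3p6:
  "\<exists>\<epsilon>0>0. \<forall>\<epsilon>. 0 < \<epsilon> \<and> \<epsilon> < \<epsilon>0 \<longrightarrow>
     (let \<alpha> = log 2 5 / (log 2 5 + 1 - \<epsilon>) in
      \<exists>C>0. \<forall>Ts :: nat \<Rightarrow> nat set.
        (\<forall>h. Ts h \<subseteq> {..<2 * h} \<and> card (Ts h) = k_param \<alpha> (2 * h)) \<longrightarrow>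
        (\<lambda>h. good_prob \<alpha> C (2 * h) (Ts h)) \<longlonglongrightarrow> 1)"
proof (intro exI[of _ "1/10 :: real"] conjI allI impI)
  fix \<epsilon> :: real
  assume "0 < \<epsilon> \<and> \<epsilon> < 1/10"
  then have "1/2 \<le> log 2 5 / (log 2 5 + 1 - \<epsilon>)" "log 2 5 / (log 2 5 + 1 - \<epsilon>) \<le> 4/5"
    using alpha_bounds by auto
  then show "let \<alpha> = log 2 5 / (log 2 5 + 1 - \<epsilon>) in
      \<exists>C>0. \<forall>Ts :: nat \<Rightarrow> nat set.
        (\<forall>h. Ts h \<subseteq> {..<2 * h} \<and> card (Ts h) = k_param \<alpha> (2 * h)) \<longrightarrow>
        (\<lambda>h. good_prob \<alpha> C (2 * h) (Ts h)) \<longlonglongrightarrow> 1"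
    unfolding Let_def by (intro exI[of _ 210] conjI allI impI good_prob_tendsto_1) auto
qed simp

end
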